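(* Let $T(u)=\exp\big(u\,\mathrm{diag}\big(\begin{psmallmatrix}0&1\\1&0\end{psmallmatrix},\begin{psmallmatrix}0&1\\-1&0\end{psmallmatrix},0\big)\big)\in SO^+(1,4)$ and let $\xi_i=T(u)E_i$. Consider Willmore surfaces (with dual surfaces) invariant under $T$, with initial curve $Y(u)=T(u)(a,0,b,0,c)^t$, $a=\cos\theta$, $b=\sin\theta$, $c=\sqrt{\cos2\theta}$, $0\le\theta\le\pi/4$, and invariant frame along it given in the basis $\xi_i$ by $\psi=(0,-b^2q,-\frac ca\sqrt{1-b^2q^2},abq,\frac ba\sqrt{1-b^2q^2})+hY$, $P_1=(0,a,0,b,0)+mY$, $P_2=(-cq,-b\sqrt{1-b^2q^2},0,a\sqrt{1-b^2q^2},-aq)+pY$ with real constants $h,m,q,p$, $|q|\le1/|b|$, and $\hat Y$ the null vector orthogonal to $P_1,P_2,\psi,\psi'$ with $\langle\hat Y,Y\rangle=-1$. Then all such surfaces are obtained as follows: (i) If $c\ne0$, then $p=\frac{amh+a^2q-bcm\sqrt{1-b^2q^2}}{ac}$ and the Björling data are $(\mu_1,\mu_2,k_1,k_2)=\big(m,\ acq-p,\ \frac{bc\sqrt{1-b^2q^2}}{2a}-\frac h2,\ -\frac c2\big)$, $\rho_1=\frac{a^2h^2-2abch\sqrt{1-q^2b^2}+a^2p^2+c^4q^2-2a^3cpq-a^2m^2+c^2}{2a^2}$, $\rho_2=\frac{a^2cmq-ach-amp-b\sqrt{1-q^2b^2}}{a}$, with $0\le\theta<\pi/4$, $|q|\le1/|\sin\theta|$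 and $m,q,h$ arbitrary. (ii) If $c=0$, the Björling data are $(\mu_1,\mu_2,k_1,k_2,\rho_1,\rho_2)=\big(m,-p,-\frac h2,0,\frac{h^2+p^2-m^2}2,-pm-\sqrt{1-h^2m^2}\big)$ with $h,m,p\in\mathbb R$ arbitrary subject to $|hm|\le1$.
   Context: $\mathbb R^5_1$ is $\mathbb R^5$ with $\langle x,y\rangle=-x_0y_0+\sum_{j=1}^4x_jy_j$ and standard basis $E_0,\dots,E_4$; surfaces are $y=[Y]$ with $Y$ in the forward light cone. For a Willmore surface with canonical lift $Y$ w.r.t. $z=u+iv$ ($\langle Y_z,Y_z\rangle=0,\langle Y_z,Y_{\bar z}\rangle=\frac12$), conformal Gauss map $\psi$ (unit spacelike, orthogonal to $Y,Y_z,Y_{\bar z},Y_{z\bar z}$) and dual surface $[\hat Y]$ (second envelope of $\psi$: $\langle\hat Y,\psi\rangle=\langle\hat Y,\psi_z\rangle=0$, $\langle Y,\hat Y\rangle=-1$), with unit vector fields $P_1,P_2$ along $v=0$ satisfying $P_1\equiv Y_u\bmod Y$, $P_1\perp\hat Y$, $P_2\perp\{\psi,Y,\hat Y,P_1\}$, the Björling data are the real functions with $Y_u=-\mu_1Y+P_1$, $\hat Y_u=\mu_1\hat Y+\rho_1P_1+\rho_2P_2$, $P_{1u}=\mu_2P_2+2k_1\psi+\hat Y+\rho_1Y$, $P_{2u}=-\mu_2P_1-2k_2\psi+\rho_2Y$, $\psi_u=-2k_1P_1+2k_2P_2$. The constraint $\langle\hat Y,\psi'\rangle=0$ is equivalent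 to $amh+a^2q-bcm\sqrt{1-b^2q^2}-acp=0$. *)

theory Defs
  imports "HOL-Analysis.Analysis"
begin

definition vec5 :: "real \<Rightarrow> real \<Rightarrow> real \<Rightarrow> real \<Rightarrow> real \<Rightarrow> real^5" where
  "vec5 x0 x1 x2 x3 x4 =
     (\<chi> i. if i = 0 then x0 else if i = 1 then x1 else if i = 2 then x2
           else if i = 3 then x3 else x4)"

definition lor :: "real^5 \<Rightarrow> real^5 \<Rightarrow> real" where
  "lor x y = - (x$0 * y$0) + x$1 * y$1 + x$2 * y$2 + x$3 * y$3 + x$4 * y$4"

text \<open>The one-parameter group T(u) = exp(u G), G = diag(A, B, 0),
  A = [[0,1],[1,0]], B the 2x2 rotation generator,
  written out entrywise.\<close>

definition Tmat :: "real \<Rightarrow> real^5^5" where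
  "Tmat u = (\<chi> i j.
      if i = 0 \<and> j = 0 then cosh u else if i = 0 \<and> j = 1 then sinh u
      else if i = 1 \<and> j = 0 then sinh u else if i = 1 \<and> j = 1 then cosh u
      else if i = 2 \<and> j = 2 then cos u else if i = 2 \<and> j = 3 then - sin u
      else if i = 3 \<and> j = 2 then sin u else if i = 3 \<and> j = 3 then cos u
      else if i = 4 \<and> j = 4 then 1 else 0)"

text \<open>Coordinates w.r.t. the moving basis xi_i = T(u) E_i.\<close>
definition inXi :: "real \<Rightarrow> real^5 \<Rightarrow> real^5" where
  "inXi u v = Tmat u *v v"

definition ca :: "real \<Rightarrow> real" where "ca \<theta> = cos \<theta>"
definition cb :: "real \<Rightarrow> real" where "cb \<theta> = sin \<theta>"
definition cc :: "real \<Rightarrow> real" where "cc \<theta> = sqrt (cos (2 * \<theta>))"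
definition sq :: "real \<Rightarrow> real \<Rightarrow> real" where
  "sq \<theta> q = sqrt (1 - (sin \<theta>)^2 * q^2)"

definition Ycurve :: "real \<Rightarrow> real \<Rightarrow> real^5" where
  "Ycurve \<theta> u = inXi u (vec5 (ca \<theta>) 0 (cb \<theta>) 0 (cc \<theta>))"

definition psiF :: "real \<Rightarrow> real \<Rightarrow> real \<Rightarrow> real \<Rightarrow> real^5" where
  "psiF \<theta> h q u =
     inXi u (vec5 0 (- ((cb \<theta>)^2) * q) (- (cc \<theta> / ca \<theta>) * sq \<theta> q)
                  (ca \<theta> * cb \<theta> * q) ((cb \<theta> / ca \<theta>) * sq \<theta> q))
     + h *\<^sub>R Ycurve \<theta> u"

definition P1F :: "real \<Rightarrow> real \<Rightarrow> real \<Rightarrow> real^5" where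
  "P1F \<theta> m u = inXi u (vec5 0 (ca \<theta>) 0 (cb \<theta>) 0) + m *\<^sub>R Ycurve \<theta> u"

definition P2F :: "real \<Rightarrow> real \<Rightarrow> real \<Rightarrow> real \<Rightarrow> real^5" where
  "P2F \<theta> q p u =
     inXi u (vec5 (- (cc \<theta>) * q) (- (cb \<theta>) * sq \<theta> q) 0 (ca \<theta> * sq \<theta> q) (- (ca \<theta>) * q))
     + p *\<^sub>R Ycurve \<theta> u"

text \<open>All conditions on the dual curve Yhat along the initial curve and the
  Bjoerling data (mu1, mu2, k1, k2, rho1, rho2), as functions of u.\<close>
definition admissible ::
  "real \<Rightarrow> real \<Rightarrow> real \<Rightarrow> real \<Rightarrow> real \<Rightarrow> (real \<Rightarrow> real^5)
   \<Rightarrow> (real \<Rightarrow> real) \<Rightarrow> (real \<Rightarrow> real) \<Rightarrow> (real \<Rightarrow> real) \<Rightarrow> (real \<Rightarrow> real)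
   \<Rightarrow> (real \<Rightarrow> real) \<Rightarrow> (real \<Rightarrow> real) \<Rightarrow> bool" where
  "admissible \<theta> h m q p Yh \<mu>1 \<mu>2 k1 k2 \<rho>1 \<rho>2 \<longleftrightarrow>
     (\<forall>u.
        lor (Yh u) (Yh u) = 0 \<and>
        lor (Yh u) (P1F \<theta> m u) = 0 \<and>
        lor (Yh u) (P2F \<theta> q p u) = 0 \<and>
        lor (Yh u) (psiF \<theta> h q u) = 0 \<and>
        lor (Yh u) (vector_derivative (psiF \<theta> h q) (at u)) = 0 \<and>
        lor (Yh u) (Ycurve \<theta> u) = -1 \<and>
        (Ycurve \<theta> has_vector_derivative
           (- \<mu>1 u *\<^sub>R Ycurve \<theta> u + P1F \<theta> m u)) (at u) \<and>
        (Yh has_vector_derivative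
           (\<mu>1 u *\<^sub>R Yh u + \<rho>1 u *\<^sub>R P1F \<theta> m u + \<rho>2 u *\<^sub>R P2F \<theta> q p u)) (at u) \<and>
        (P1F \<theta> m has_vector_derivative
           (\<mu>2 u *\<^sub>R P2F \<theta> q p u + (2 * k1 u) *\<^sub>R psiF \<theta> h q u + Yh u
            + \<rho>1 u *\<^sub>R Ycurve \<theta> u)) (at u) \<and>
        (P2F \<theta> q p has_vector_derivative
           (- \<mu>2 u *\<^sub>R P1F \<theta> m u - (2 * k2 u) *\<^sub>R psiF \<theta> h q u
            + \<rho>2 u *\<^sub>R Ycurve \<theta> u)) (at u) \<and>
        (psiF \<theta> h q has_vector_derivative
           (- (2 * k1 u) *\<^sub>R P1F \<theta> m u + (2 * k2 u) *\<^sub>R P2F \<theta> q p u)) (at u))"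

end

theory Submission
  imports Defs
begin

(* Everything along the initial curve is T(u) applied to a constant vector: Y, P1, P2 and psi
   are T(u) of fixed vectors Y0 + ..., and d/du (T(u) x) = T(u) (G x) for the generator G
   (called gen below).  Since T(u) is a Lorentz isometry, all conditions in the definition of
   admissible Bjoerling data become conditions on constant vectors, and the unknown dual curve
   is forced to be of the form T(u) Yhat0 with Yhat0 a constant vector.

   The computation is organised in the pseudo-orthonormal frame (Y0, Yd, P1_0, Psi0, P2_0):
   Y0, Yd null with lor Y0 Yd = -1, the other three unit and orthogonal.  In its coordinates
   (fvec) the Lorentz form and the generator G have simple closed forms (lor_fvec, gen_fvec). *)

lemma exhaust_5: fixes i :: 5 shows "i = 0 \<or> i = 1 \<or> i = 2 \<or> i = 3 \<or> i = 4"
proof (induct i)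
  case (of_int z)
  then have "z = 0 \<or> z = 1 \<or> z = 2 \<or> z = 3 \<or> z = 4" by simp presburger
  then show ?case by (elim disjE) simp_all
qed

lemma forall_5: "(\<forall>i::5. P i) \<longleftrightarrow> P 0 \<and> P 1 \<and> P 2 \<and> P 3 \<and> P 4"
  using exhaust_5 by metis

lemma vec5_nth [simp]:
  "vec5 x0 x1 x2 x3 x4 $ 0 = x0" "vec5 x0 x1 x2 x3 x4 $ 1 = x1" "vec5 x0 x1 x2 x3 x4 $ 2 = x2"
  "vec5 x0 x1 x2 x3 x4 $ 3 = x3" "vec5 x0 x1 x2 x3 x4 $ 4 = x4"
  by (simp_all add: vec5_def)

lemma vec5_cases: obtains x0 x1 x2 x3 x4 where "v = vec5 x0 x1 x2 x3 x4"
proof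
  show "v = vec5 (v$0) (v$1) (v$2) (v$3) (v$4)" unfolding vec_eq_iff forall_5 by simp
qed

lemma vec5_eq_iff:
  "vec5 x0 x1 x2 x3 x4 = vec5 y0 y1 y2 y3 y4 \<longleftrightarrow> x0 = y0 \<and> x1 = y1 \<and> x2 = y2 \<and> x3 = y3 \<and> x4 = y4"
  unfolding vec_eq_iff forall_5 by simp

lemma vec5_arith [simp]:
  "vec5 x0 x1 x2 x3 x4 + vec5 y0 y1 y2 y3 y4 = vec5 (x0+y0) (x1+y1) (x2+y2) (x3+y3) (x4+y4)"
  "vec5 x0 x1 x2 x3 x4 - vec5 y0 y1 y2 y3 y4 = vec5 (x0-y0) (x1-y1) (x2-y2) (x3-y3) (x4-y4)"
  "r *\<^sub>R vec5 x0 x1 x2 x3 x4 = vec5 (r*x0) (r*x1) (r*x2) (r*x3) (r*x4)"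
  "- vec5 x0 x1 x2 x3 x4 = vec5 (-x0) (-x1) (-x2) (-x3) (-x4)"
  unfolding vec_eq_iff forall_5 by simp_all

lemma lor_vec5 [simp]:
  "lor (vec5 x0 x1 x2 x3 x4) (vec5 y0 y1 y2 y3 y4) = - (x0*y0) + x1*y1 + x2*y2 + x3*y3 + x4*y4"
  by (simp add: lor_def)

lemma lor_sym: "lor x y = lor y x"
  by (simp add: lor_def algebra_simps)

lemma lor_bilinear [simp]:
  "lor (x + y) z = lor x z + lor y z" "lor z (x + y) = lor z x + lor z y"
  "lor (x - y) z = lor x z - lor y z" "lor z (x - y) = lor z x - lor z y"
  "lor (r *\<^sub>R x) z = r * lor x z" "lor z (r *\<^sub>R x) = r * lor z x"
  "lor (- x) z = - lor x z" "lor z (- x) = - lor z x"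
  by (simp_all add: lor_def algebra_simps)

lemma Tmat_vec5:
  "Tmat u *v vec5 x0 x1 x2 x3 x4 =
     vec5 (cosh u * x0 + sinh u * x1) (sinh u * x0 + cosh u * x1)
          (cos u * x2 - sin u * x3) (sin u * x2 + cos u * x3) x4"
proof -
  have "sum f (UNIV :: 5 set) = f 0 + f 1 + f 2 + f 3 + f 4" for f :: "5 \<Rightarrow> real"
  proof -
    have U: "(UNIV :: 5 set) = {0, 1, 2, 3, 4}" using exhaust_5 by auto
    show ?thesis unfolding U by (simp add: add.assoc)
  qed
  then show ?thesis
    unfolding vec_eq_iff forall_5 matrix_vector_mult_def by (simp add: Tmat_def)
qed

(* T(u) is a Lorentz isometry (cosh^2 - sinh^2 = 1, sin^2 + cos^2 = 1). *)
lemma lor_Tmat [simp]: "lor (Tmat u *v x) (Tmat u *v y) = lor x y"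
proof -
  obtain x0 x1 x2 x3 x4 where x: "x = vec5 x0 x1 x2 x3 x4" by (rule vec5_cases)
  obtain y0 y1 y2 y3 y4 where y: "y = vec5 y0 y1 y2 y3 y4" by (rule vec5_cases)
  show ?thesis unfolding x y Tmat_vec5 lor_vec5
    using cosh_square_eq[of u] sin_cos_squared_add[of u] by algebra
qed

lemma Tmat_linear [simp]:
  "Tmat u *v x + Tmat u *v y = Tmat u *v (x + y)"
  "Tmat u *v x - Tmat u *v y = Tmat u *v (x - y)"
  "r *\<^sub>R (Tmat u *v x) = Tmat u *v (r *\<^sub>R x)"
  "- (Tmat u *v x) = Tmat u *v (- x)"
  by (simp_all add: matrix_vector_right_distrib matrix_vector_mult_diff_distrib
      matrix_vector_mult_scaleR)
     (metis matrix_vector_mult_scaleR scaleR_minus1_left)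

lemma Tmat_inverse: "Tmat u *v (Tmat (- u) *v x) = x"
proof -
  obtain x0 x1 x2 x3 x4 where x: "x = vec5 x0 x1 x2 x3 x4" by (rule vec5_cases)
  show ?thesis
    unfolding x Tmat_vec5 vec5_eq_iff cosh_minus sinh_minus cos_minus sin_minus
    using cosh_square_eq[of u] sin_cos_squared_add[of u] by algebra
qed

(* The infinitesimal generator G = diag(A, B, 0) of the group T. *)
definition gen :: "real^5 \<Rightarrow> real^5" where
  "gen v = vec5 (v$1) (v$0) (- v$3) (v$2) 0"

lemma gen_vec5 [simp]: "gen (vec5 x0 x1 x2 x3 x4) = vec5 x1 x0 (- x3) x2 0"
  by (simp add: gen_def)

lemma gen_linear [simp]:
  "gen (x + y) = gen x + gen y" "gen (x - y) = gen x - gen y" "gen (r *\<^sub>R x) = r *\<^sub>R gen x"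
  by (simp_all add: gen_def)

lemma Tmat_has_derivative: "((\<lambda>u. Tmat u *v v) has_vector_derivative Tmat u *v gen v) (at u)"
proof -
  obtain x0 x1 x2 x3 x4 where v: "v = vec5 x0 x1 x2 x3 x4" by (rule vec5_cases)
  have decomp: "vec5 y0 y1 y2 y3 y4 = y0 *\<^sub>R vec5 1 0 0 0 0 + y1 *\<^sub>R vec5 0 1 0 0 0
      + y2 *\<^sub>R vec5 0 0 1 0 0 + y3 *\<^sub>R vec5 0 0 0 1 0 + y4 *\<^sub>R vec5 0 0 0 0 1" for y0 y1 y2 y3 y4
    by simp
  have "((\<lambda>u. vec5 (cosh u * x0 + sinh u * x1) (sinh u * x0 + cosh u * x1)
                   (cos u * x2 - sin u * x3) (sin u * x2 + cos u * x3) x4)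
        has_vector_derivative vec5 (sinh u * x0 + cosh u * x1) (cosh u * x0 + sinh u * x1)
                   (- sin u * x2 - cos u * x3) (cos u * x2 - sin u * x3) 0) (at u)"
    apply (subst decomp)
    apply (subst (2) decomp[of _ _ _ _ 0])
    apply (rule derivative_eq_intros refl | simp)+
    done
  moreover have "Tmat u *v gen v = vec5 (sinh u * x0 + cosh u * x1) (cosh u * x0 + sinh u * x1)
                   (- sin u * x2 - cos u * x3) (cos u * x2 - sin u * x3) 0"
    unfolding v gen_vec5 Tmat_vec5 vec5_eq_iff by (simp add: algebra_simps)
  ultimately show ?thesis
    unfolding v Tmat_vec5 by simp
qed

(* Conversely a derivative of the form T(u) y forces y = G x: derivatives are unique and
   T(u) is injective. *)
lemma Tmat_derivative_iff:
  "((\<lambda>u. Tmat u *v x) has_vector_derivative Tmat u *v y) (at u) \<longleftrightarrow> gen x = y"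
proof
  assume "((\<lambda>u. Tmat u *v x) has_vector_derivative Tmat u *v y) (at u)"
  then have "Tmat u *v gen x = Tmat u *v y"
    using vector_derivative_unique_at[OF Tmat_has_derivative] by blast
  then show "gen x = y" by (metis Tmat_inverse minus_minus)
qed (use Tmat_has_derivative in blast)

lemma vector_derivative_Tmat: "vector_derivative (\<lambda>u. Tmat u *v x) (at u) = Tmat u *v gen x"
  by (rule vector_derivative_at[OF Tmat_has_derivative])

(* The algebraic data of the initial frame: a = cos theta, b = sin theta, c^2 = cos 2theta,
   s = sqrt(1 - b^2 q^2), ia = 1/a, recorded only through the polynomial relations they satisfy. *)
locale lorentz_frame =
  fixes a b c s q ia :: real
  assumes inv_a: "a * ia = 1" and ab_sq: "a^2 + b^2 = 1" and c_sq: "c^2 = a^2 - b^2"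
    and s_sq: "s^2 = 1 - b^2 * q^2"
begin

lemmas frame_relations = inv_a ab_sq c_sq s_sq

(* The frame at u = 0: the curve point Y0, the vectors P1_0, Psi0, P2_0 (without their Y-parts),
   and the dual null vector Yd, obtained from the null vector N0 (lor N0 Y0 = -1) by the null
   rotation that makes it orthogonal to P2_0. *)
definition "Y0 = vec5 a 0 b 0 c"
definition "P1_0 = vec5 0 a 0 b 0"
definition "Psi0 = vec5 0 (- (b^2) * q) (- (c * ia) * s) (a * b * q) ((b * ia) * s)"
definition "P2_0 = vec5 (- c * q) (- b * s) 0 (a * s) (- a * q)"
definition "N0 = (ia^2 / 2) *\<^sub>R vec5 a 0 (- b) 0 (- c)"
definition "Yd = N0 - (c * q * ia) *\<^sub>R P2_0 - ((c * q * ia)^2 / 2) *\<^sub>R Y0"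

lemmas frame_defs = Y0_def P1_0_def Psi0_def P2_0_def N0_def

lemma base_gram:
  "lor Y0 Y0 = 0" "lor Y0 P1_0 = 0" "lor Y0 Psi0 = 0" "lor Y0 P2_0 = 0"
  "lor P1_0 P1_0 = 1" "lor P1_0 Psi0 = 0" "lor P1_0 P2_0 = 0"
  "lor Psi0 Psi0 = 1" "lor Psi0 P2_0 = 0" "lor P2_0 P2_0 = 1"
  "lor N0 N0 = 0" "lor N0 Y0 = -1" "lor N0 P1_0 = 0" "lor N0 Psi0 = 0" "lor N0 P2_0 = c * q * ia"
  unfolding frame_defs lor_bilinear lor_vec5
  by (algebra | use frame_relations in algebra | simp add: field_simps, use frame_relations in algebra)+

lemma dual_gram: "lor Yd Y0 = -1" "lor Yd Yd = 0" "lor Yd P1_0 = 0" "lor Yd Psi0 = 0" "lor Yd P2_0 = 0"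
  using base_gram base_gram[THEN trans[OF lor_sym]] unfolding Yd_def
  by (simp_all add: algebra_simps power2_eq_square)

lemmas frame_gram = base_gram dual_gram base_gram[THEN trans[OF lor_sym]] dual_gram[THEN trans[OF lor_sym]]

definition fvec :: "real \<Rightarrow> real \<Rightarrow> real \<Rightarrow> real \<Rightarrow> real \<Rightarrow> real^5" where
  "fvec k1 k2 k3 k4 k5 = k1 *\<^sub>R Y0 + k2 *\<^sub>R Yd + k3 *\<^sub>R P1_0 + k4 *\<^sub>R Psi0 + k5 *\<^sub>R P2_0"

lemma lor_fvec:
  "lor (fvec k1 k2 k3 k4 k5) (fvec l1 l2 l3 l4 l5) = - (k1 * l2) - k2 * l1 + k3 * l3 + k4 * l4 + k5 * l5"
  unfolding fvec_def by (simp add: frame_gram algebra_simps)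

lemma fvec_eq_iff:
  "fvec k1 k2 k3 k4 k5 = fvec l1 l2 l3 l4 l5 \<longleftrightarrow> k1 = l1 \<and> k2 = l2 \<and> k3 = l3 \<and> k4 = l4 \<and> k5 = l5"
proof
  assume eq: "fvec k1 k2 k3 k4 k5 = fvec l1 l2 l3 l4 l5"
  have "lor (fvec k1 k2 k3 k4 k5) (fvec x1 x2 x3 x4 x5) = lor (fvec l1 l2 l3 l4 l5) (fvec x1 x2 x3 x4 x5)"
    for x1 x2 x3 x4 x5 using eq by simp
  from this[of 0 1 0 0 0] this[of 1 0 0 0 0] this[of 0 0 1 0 0] this[of 0 0 0 1 0] this[of 0 0 0 0 1]
  show "k1 = l1 \<and> k2 = l2 \<and> k3 = l3 \<and> k4 = l4 \<and> k5 = l5" unfolding lor_fvec by simp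
qed simp

lemma fvec_cases: obtains k1 k2 k3 k4 k5 where "v = fvec k1 k2 k3 k4 k5"
proof
  obtain v0 v1 v2 v3 v4 where v: "v = vec5 v0 v1 v2 v3 v4" by (rule vec5_cases)
  show "v = fvec (- lor v Yd) (- lor v Y0) (lor v P1_0) (lor v Psi0) (lor v P2_0)"
    unfolding v fvec_def Yd_def frame_defs lor_bilinear lor_vec5 vec5_arith vec5_eq_iff
    by (intro conjI) (use frame_relations in algebra)+
qed

lemma fvec_arith [simp]:
  "fvec k1 k2 k3 k4 k5 + fvec l1 l2 l3 l4 l5 = fvec (k1+l1) (k2+l2) (k3+l3) (k4+l4) (k5+l5)"
  "fvec k1 k2 k3 k4 k5 - fvec l1 l2 l3 l4 l5 = fvec (k1-l1) (k2-l2) (k3-l3) (k4-l4) (k5-l5)"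
  "r *\<^sub>R fvec k1 k2 k3 k4 k5 = fvec (r*k1) (r*k2) (r*k3) (r*k4) (r*k5)"
  "- fvec k1 k2 k3 k4 k5 = fvec (-k1) (-k2) (-k3) (-k4) (-k5)"
  unfolding fvec_def by (simp_all add: algebra_simps)

definition "w = c^2 * ia^2 / 2 + c^2 * q^2 - c^2 * q^2 * ia^2 / 2"

lemma gen_frame:
  "gen Y0 = P1_0"
  "gen Yd = w *\<^sub>R P1_0 - (q * a) *\<^sub>R Psi0 - (b * s * ia) *\<^sub>R P2_0"
  "gen P1_0 = w *\<^sub>R Y0 + Yd + (b * c * ia * s) *\<^sub>R Psi0 + (a * c * q) *\<^sub>R P2_0"
  "gen Psi0 = (- (q * a)) *\<^sub>R Y0 - (b * c * ia * s) *\<^sub>R P1_0 - c *\<^sub>R P2_0"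
  "gen P2_0 = (- (b * s * ia)) *\<^sub>R Y0 - (a * c * q) *\<^sub>R P1_0 + c *\<^sub>R Psi0"
  unfolding Yd_def frame_defs w_def gen_linear gen_vec5 vec5_arith vec5_eq_iff
  by safe (algebra | use frame_relations in algebra
      | simp add: field_simps, use frame_relations in algebra)+

lemma gen_fvec:
  "gen (fvec k1 k2 k3 k4 k5) =
     fvec (k3 * w - k4 * q * a - k5 * b * s * ia) k3
          (k1 + k2 * w - k4 * b * c * ia * s - k5 * a * c * q)
          (- k2 * q * a + k3 * b * c * ia * s + k5 * c)
          (- k2 * b * s * ia + k3 * a * c * q - k4 * c)"
  unfolding fvec_def gen_linear gen_frame fvec_eq_iff by (simp add: fvec_def algebra_simps)

end

locale invariant_frame = lorentz_frame +
  fixes \<theta> :: real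
  assumes a_eq: "a = cos \<theta>" and b_eq: "b = sin \<theta>" and c_eq: "c = sqrt (cos (2 * \<theta>))"
    and s_eq: "s = sqrt (1 - (sin \<theta>)^2 * q^2)" and ia_eq: "ia = inverse a"
begin

lemma invariant_curves:
  "Ycurve \<theta> = (\<lambda>u. Tmat u *v fvec 1 0 0 0 0)"
  "psiF \<theta> h q = (\<lambda>u. Tmat u *v fvec h 0 0 1 0)"
  "P1F \<theta> m = (\<lambda>u. Tmat u *v fvec m 0 1 0 0)"
  "P2F \<theta> q p = (\<lambda>u. Tmat u *v fvec p 0 0 0 1)"
proof -
  have coeffs: "ca \<theta> = a" "cb \<theta> = b" "cc \<theta> = c" "sq \<theta> q = s"
      "cc \<theta> / ca \<theta> = c * ia" "cb \<theta> / ca \<theta> = b * ia"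
    unfolding ca_def cb_def cc_def sq_def by (simp_all add: a_eq b_eq c_eq s_eq ia_eq divide_inverse)
  show "Ycurve \<theta> = (\<lambda>u. Tmat u *v fvec 1 0 0 0 0)" "psiF \<theta> h q = (\<lambda>u. Tmat u *v fvec h 0 0 1 0)"
    "P1F \<theta> m = (\<lambda>u. Tmat u *v fvec m 0 1 0 0)" "P2F \<theta> q p = (\<lambda>u. Tmat u *v fvec p 0 0 0 1)"
    unfolding psiF_def P1F_def P2F_def Ycurve_def inXi_def coeffs fvec_def Y0_def Psi0_def P1_0_def P2_0_def
    by (simp_all add: fun_eq_iff algebra_simps ia_eq divide_inverse)
qed

(* For a T-invariant dual curve T(u) Z, admissibility is a system of conditions on the
   constant vectors, since T(u) is an isometry and d/du T(u) x = T(u) (G x). *)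
lemma admissible_invariant_iff:
  "admissible \<theta> h m q p (\<lambda>u. Tmat u *v Z) \<mu>1 \<mu>2 k1 k2 \<rho>1 \<rho>2 \<longleftrightarrow>
    lor Z Z = 0 \<and> lor Z (fvec m 0 1 0 0) = 0 \<and> lor Z (fvec p 0 0 0 1) = 0 \<and>
    lor Z (fvec h 0 0 1 0) = 0 \<and> lor Z (gen (fvec h 0 0 1 0)) = 0 \<and> lor Z (fvec 1 0 0 0 0) = -1 \<and>
    (\<forall>u. gen (fvec 1 0 0 0 0) = - \<mu>1 u *\<^sub>R fvec 1 0 0 0 0 + fvec m 0 1 0 0 \<and>
         gen Z = \<mu>1 u *\<^sub>R Z + \<rho>1 u *\<^sub>R fvec m 0 1 0 0 + \<rho>2 u *\<^sub>R fvec p 0 0 0 1 \<and>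
         gen (fvec m 0 1 0 0) = \<mu>2 u *\<^sub>R fvec p 0 0 0 1 + (2 * k1 u) *\<^sub>R fvec h 0 0 1 0 + Z
                                 + \<rho>1 u *\<^sub>R fvec 1 0 0 0 0 \<and>
         gen (fvec p 0 0 0 1) = - \<mu>2 u *\<^sub>R fvec m 0 1 0 0 - (2 * k2 u) *\<^sub>R fvec h 0 0 1 0
                                 + \<rho>2 u *\<^sub>R fvec 1 0 0 0 0 \<and>
         gen (fvec h 0 0 1 0) = - (2 * k1 u) *\<^sub>R fvec m 0 1 0 0 + (2 * k2 u) *\<^sub>R fvec p 0 0 0 1)"
  unfolding admissible_def invariant_curves vector_derivative_Tmat lor_Tmat Tmat_linear
    Tmat_derivative_iff
  by blast

(* The dual vector, the constraint lor Yhat psi' = 0 (equal to the paper's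
   amh + a^2 q - bcm s - acp divided by a) and the values of rho1, rho2. *)
definition "Yhat0 h m p = fvec ((m^2 + h^2 + p^2) / 2) 1 m h p"
definition "dual_constraint h m p = q * a + m * h - b * c * ia * m * s - p * c"
definition "rho1 h m p = (m^2 + h^2 + p^2) / 2 + w - h * b * c * ia * s - p * a * c * q - m^2"
definition "rho2 h m p = - (b * s * ia) + m * a * c * q - h * c - m * p"

lemma dual_determined:
  "lor Z Z = 0 \<and> lor Z (fvec m 0 1 0 0) = 0 \<and> lor Z (fvec p 0 0 0 1) = 0 \<and>
   lor Z (fvec h 0 0 1 0) = 0 \<and> lor Z (fvec 1 0 0 0 0) = -1 \<longleftrightarrow> Z = Yhat0 h m p"
proof -
  obtain z1 z2 z3 z4 z5 where Z: "Z = fvec z1 z2 z3 z4 z5" by (rule fvec_cases)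
  show ?thesis
    unfolding Z Yhat0_def lor_fvec fvec_eq_iff by (auto simp: field_simps power2_eq_square)
qed

lemma dual_constraint_lor: "lor (Yhat0 h m p) (gen (fvec h 0 0 1 0)) = dual_constraint h m p"
  unfolding Yhat0_def gen_fvec lor_fvec dual_constraint_def by (simp add: algebra_simps)

lemma structure_equations_iff:
  assumes constraint: "dual_constraint h m p = 0"
  shows
   "gen (fvec 1 0 0 0 0) = - \<mu>1 *\<^sub>R fvec 1 0 0 0 0 + fvec m 0 1 0 0 \<and>
    gen (Yhat0 h m p) = \<mu>1 *\<^sub>R Yhat0 h m p + \<rho>1 *\<^sub>R fvec m 0 1 0 0 + \<rho>2 *\<^sub>R fvec p 0 0 0 1 \<and>
    gen (fvec m 0 1 0 0) = \<mu>2 *\<^sub>R fvec p 0 0 0 1 + (2 * k1) *\<^sub>R fvec h 0 0 1 0 + Yhat0 h m p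
                            + \<rho>1 *\<^sub>R fvec 1 0 0 0 0 \<and>
    gen (fvec p 0 0 0 1) = - \<mu>2 *\<^sub>R fvec m 0 1 0 0 - (2 * k2) *\<^sub>R fvec h 0 0 1 0
                            + \<rho>2 *\<^sub>R fvec 1 0 0 0 0 \<and>
    gen (fvec h 0 0 1 0) = - (2 * k1) *\<^sub>R fvec m 0 1 0 0 + (2 * k2) *\<^sub>R fvec p 0 0 0 1
    \<longleftrightarrow> \<mu>1 = m \<and> \<mu>2 = a * c * q - p \<and> k1 = (b * c * ia * s - h) / 2 \<and> k2 = - c / 2 \<and>
        \<rho>1 = rho1 h m p \<and> \<rho>2 = rho2 h m p"
    (is "?structure \<longleftrightarrow> ?data")
proof
  assume eqs: ?structure
  have gen_Y: "gen (fvec 1 0 0 0 0) = - \<mu>1 *\<^sub>R fvec 1 0 0 0 0 + fvec m 0 1 0 0"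
    and gen_P1: "gen (fvec m 0 1 0 0) = \<mu>2 *\<^sub>R fvec p 0 0 0 1 + (2 * k1) *\<^sub>R fvec h 0 0 1 0
       + Yhat0 h m p + \<rho>1 *\<^sub>R fvec 1 0 0 0 0"
    and gen_P2: "gen (fvec p 0 0 0 1) = - \<mu>2 *\<^sub>R fvec m 0 1 0 0 - (2 * k2) *\<^sub>R fvec h 0 0 1 0
       + \<rho>2 *\<^sub>R fvec 1 0 0 0 0"
    using eqs by blast+
  have mu1: "\<mu>1 = m"
    using gen_Y unfolding gen_fvec fvec_arith fvec_eq_iff by simp
  have mu2: "\<mu>2 = a * c * q - p" and k1: "k1 = (b * c * ia * s - h) / 2"
    using gen_P1 unfolding Yhat0_def gen_fvec fvec_arith fvec_eq_iff by (simp_all add: field_simps)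
  have rho1: "\<rho>1 = rho1 h m p"
    using gen_P1 unfolding Yhat0_def gen_fvec fvec_arith fvec_eq_iff rho1_def mu2 k1
    by (simp add: field_simps power2_eq_square)
  have k2: "k2 = - c / 2"
    using gen_P2 unfolding gen_fvec fvec_arith fvec_eq_iff by (simp add: field_simps)
  have rho2: "\<rho>2 = rho2 h m p"
    using gen_P2 unfolding gen_fvec fvec_arith fvec_eq_iff rho2_def mu2 k2 by (simp add: field_simps)
  show ?data using mu1 mu2 k1 k2 rho1 rho2 by blast
next
  assume ?data
  then show ?structure
    using constraint unfolding Yhat0_def gen_fvec fvec_arith fvec_eq_iff rho1_def rho2_def dual_constraint_def
    by (elim conjE) (simp add: field_simps power2_eq_square; algebra)
qed

(* Complete characterisation of admissible data along the initial curve: the dual curve is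
   forced to be T-invariant, and then the previous lemmas apply. *)
theorem admissible_iff:
  "admissible \<theta> h m q p Yh \<mu>1 \<mu>2 k1 k2 \<rho>1 \<rho>2 \<longleftrightarrow>
     dual_constraint h m p = 0 \<and> Yh = (\<lambda>u. Tmat u *v Yhat0 h m p) \<and>
     (\<forall>u. \<mu>1 u = m \<and> \<mu>2 u = a * c * q - p \<and> k1 u = (b * c * ia * s - h) / 2 \<and> k2 u = - c / 2 \<and>
          \<rho>1 u = rho1 h m p \<and> \<rho>2 u = rho2 h m p)"
    (is "?admissible \<longleftrightarrow> ?characterisation")
proof
  assume adm: ?admissible
  have Yh_eq: "Yh = (\<lambda>u. Tmat u *v Yhat0 h m p)"
  proof
    fix u
    define Z where "Z = Tmat (- u) *v Yh u"
    have Yh_u: "Yh u = Tmat u *v Z" by (simp add: Z_def Tmat_inverse)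
    have "lor Z Z = 0 \<and> lor Z (fvec m 0 1 0 0) = 0 \<and> lor Z (fvec p 0 0 0 1) = 0 \<and>
          lor Z (fvec h 0 0 1 0) = 0 \<and> lor Z (fvec 1 0 0 0 0) = -1"
      using adm[unfolded admissible_def invariant_curves, rule_format, of u]
      unfolding Yh_u lor_Tmat by blast
    then show "Yh u = Tmat u *v Yhat0 h m p" using Yh_u dual_determined by simp
  qed
  note invariant = adm[unfolded Yh_eq admissible_invariant_iff]
  have constraint: "dual_constraint h m p = 0"
    using invariant dual_constraint_lor by simp
  show ?characterisation
    using constraint Yh_eq invariant structure_equations_iff[OF constraint] by blast
next
  assume data: ?characterisation
  then have constraint: "dual_constraint h m p = 0" and Yh_eq: "Yh = (\<lambda>u. Tmat u *v Yhat0 h m p)"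
    by blast+
  have lor_conditions: "lor (Yhat0 h m p) (Yhat0 h m p) = 0 \<and> lor (Yhat0 h m p) (fvec m 0 1 0 0) = 0 \<and>
      lor (Yhat0 h m p) (fvec p 0 0 0 1) = 0 \<and> lor (Yhat0 h m p) (fvec h 0 0 1 0) = 0 \<and>
      lor (Yhat0 h m p) (fvec 1 0 0 0 0) = -1"
    using dual_determined by blast
  show ?admissible
    unfolding Yh_eq admissible_invariant_iff dual_constraint_lor
    using data constraint lor_conditions structure_equations_iff[OF constraint] by blast
qed

lemma a_nonzero: "a \<noteq> 0"
  using inv_a by auto

lemma inverse_a: "ia = 1 / a"
  using inv_a a_nonzero by (simp add: field_simps)

corollary admissible_iff_c_nonzero:
  assumes "c \<noteq> 0"
  shows "admissible \<theta> h m q p Yh \<mu>1 \<mu>2 k1 k2 \<rho>1 \<rho>2 \<longleftrightarrow>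
     p = (a * m * h + a^2 * q - b * c * m * s) / (a * c) \<and> Yh = (\<lambda>u. Tmat u *v Yhat0 h m p) \<and>
     (\<forall>u. \<mu>1 u = m \<and> \<mu>2 u = a * c * q - p \<and> k1 u = b * c * s / (2 * a) - h / 2 \<and> k2 u = - c / 2 \<and>
          \<rho>1 u = (a^2 * h^2 - 2 * a * b * c * h * s + a^2 * p^2 + c^4 * q^2 - 2 * a^3 * c * p * q
                   - a^2 * m^2 + c^2) / (2 * a^2) \<and>
          \<rho>2 u = (a^2 * c * m * q - a * c * h - a * m * p - b * s) / a)"
proof -
  have constraint: "dual_constraint h m p = 0 \<longleftrightarrow> p = (a * m * h + a^2 * q - b * c * m * s) / (a * c)"
    unfolding dual_constraint_def unfolding inverse_a using assms a_nonzero
    by (auto simp: field_simps power2_eq_square)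
  have k1: "(b * c * ia * s - h) / 2 = b * c * s / (2 * a) - h / 2"
    unfolding inverse_a using a_nonzero by (simp add: field_simps)
  have rho2: "rho2 h m p = (a^2 * c * m * q - a * c * h - a * m * p - b * s) / a"
    unfolding rho2_def unfolding inverse_a using a_nonzero by (simp add: field_simps power2_eq_square)
  have c4: "c^2 * q^2 - c^2 * q^2 * ia^2 / 2 = c^4 * q^2 * ia^2 / 2"
  proof -
    have "2 * (c^2 * q^2) - c^2 * q^2 * ia^2 = c^4 * q^2 * ia^2"
      using inv_a ab_sq c_sq by algebra
    then show ?thesis by (simp add: field_simps)
  qed
  have rho1: "rho1 h m p = (a^2 * h^2 - 2 * a * b * c * h * s + a^2 * p^2 + c^4 * q^2
                            - 2 * a^3 * c * p * q - a^2 * m^2 + c^2) / (2 * a^2)"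
  proof -
    have "rho1 h m p = (m^2 + h^2 + p^2) / 2 + c^2 * ia^2 / 2 + c^4 * q^2 * ia^2 / 2
                        - h * b * c * ia * s - p * a * c * q - m^2"
      unfolding rho1_def w_def using c4 by (simp add: algebra_simps)
    also have "\<dots> = (a^2 * h^2 - 2 * a * b * c * h * s + a^2 * p^2 + c^4 * q^2
                            - 2 * a^3 * c * p * q - a^2 * m^2 + c^2) / (2 * a^2)"
      unfolding inverse_a using a_nonzero by (simp add: field_simps power2_eq_square power3_eq_cube)
    finally show ?thesis .
  qed
  show ?thesis unfolding admissible_iff constraint k1 rho1 rho2 ..
qed

(* For c = 0 (theta = pi/4, where b = a) the constraint becomes q a = - m h, and then
   s = sqrt(1 - h^2 m^2). *)
corollary admissible_iff_c_zero:
  assumes c0: "c = 0" and "b = a"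
  shows "admissible \<theta> h m q p Yh \<mu>1 \<mu>2 k1 k2 \<rho>1 \<rho>2 \<longleftrightarrow>
     q * a = - (m * h) \<and> Yh = (\<lambda>u. Tmat u *v Yhat0 h m p) \<and>
     (\<forall>u. \<mu>1 u = m \<and> \<mu>2 u = - p \<and> k1 u = - h / 2 \<and> k2 u = 0 \<and>
          \<rho>1 u = (h^2 + p^2 - m^2) / 2 \<and> \<rho>2 u = - p * m - sqrt (1 - h^2 * m^2))"
proof -
  have constraint: "dual_constraint h m p = 0 \<longleftrightarrow> q * a = - (m * h)"
    unfolding dual_constraint_def using c0 by (auto simp: algebra_simps)
  have s_hm: "s = sqrt (1 - h^2 * m^2)" if "q * a = - (m * h)"
  proof -
    have "b^2 * q^2 = h^2 * m^2"
      using that \<open>b = a\<close> by (metis power_mult_distrib mult.commute power2_minus)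
    then show ?thesis using s_eq b_eq by simp
  qed
  have rho1: "rho1 h m p = (h^2 + p^2 - m^2) / 2"
    unfolding rho1_def w_def by (simp add: c0 field_simps)
  have rho2: "rho2 h m p = - p * m - s"
    unfolding rho2_def using c0 inv_a \<open>b = a\<close> by (simp add: algebra_simps)
  show ?thesis
    unfolding admissible_iff constraint rho1 rho2 using s_hm c0 by auto
qed

end

lemma quarter_angle:
  assumes "0 \<le> \<theta>" and "\<theta> \<le> pi / 4"
  shows "cos \<theta> > 0" and "cos (2 * \<theta>) \<ge> 0"
    and "sqrt (cos (2 * \<theta>)) = 0 \<longleftrightarrow> \<theta> = pi / 4"
    and "sqrt (cos (2 * \<theta>)) = 0 \<Longrightarrow> sin \<theta> = cos \<theta>"
proof -
  show "cos \<theta> > 0" using assms pi_gt_zero by (intro cos_gt_zero_pi) linarith+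
  show "cos (2 * \<theta>) \<ge> 0" using assms by (intro cos_ge_zero) auto
  have "cos (2 * \<theta>) > 0" if "\<theta> < pi / 4" using assms that by (intro cos_gt_zero_pi) auto
  moreover have "cos (2 * \<theta>) = 0" if "\<theta> = pi / 4"
  proof -
    have "2 * \<theta> = pi / 2" using that by simp
    then show ?thesis by (metis cos_pi_half)
  qed
  ultimately show c_zero: "sqrt (cos (2 * \<theta>)) = 0 \<longleftrightarrow> \<theta> = pi / 4"
    using assms by (cases "\<theta> < pi / 4") auto
  show "sqrt (cos (2 * \<theta>)) = 0 \<Longrightarrow> sin \<theta> = cos \<theta>"
    unfolding c_zero by (metis sin_45 cos_45)
qed

lemma invariant_frame_at:
  assumes "0 \<le> \<theta>" and "\<theta> \<le> pi / 4" and q: "\<bar>q\<bar> * \<bar>sin \<theta>\<bar> \<le> 1"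
  shows "invariant_frame (cos \<theta>) (sin \<theta>) (sqrt (cos (2 * \<theta>))) (sqrt (1 - (sin \<theta>)^2 * q^2)) q
           (inverse (cos \<theta>)) \<theta>"
proof -
  have "(sqrt (cos (2 * \<theta>)))^2 = (cos \<theta>)^2 - (sin \<theta>)^2"
    using quarter_angle(2)[OF assms(1,2)] by (simp add: cos_double)
  moreover have "(sin \<theta>)^2 * q^2 \<le> 1"
    using power_mono[OF q, of 2] by (simp add: power_mult_distrib mult.commute)
  ultimately show ?thesis using quarter_angle(1)[OF assms(1,2)]
    by unfold_locales (simp_all add: power_mult_distrib)
qed

(* The main theorem: classification (admissible_iff_c_nonzero / _c_zero) and existence
   (the same equivalences read backwards, with Yh = T(u) Yhat0, and q = -mh/a when c = 0). *)
theorem mainTheorem8: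
  fixes \<theta> :: real
  assumes "0 \<le> \<theta>" and "\<theta> \<le> pi / 4"
  shows
   "let a = cos \<theta>; b = sin \<theta>; c = sqrt (cos (2 * \<theta>)) in
    (\<forall>h m q p Yh \<mu>1 \<mu>2 k1 k2 \<rho>1 \<rho>2.
       \<bar>q\<bar> * \<bar>b\<bar> \<le> 1 \<and> admissible \<theta> h m q p Yh \<mu>1 \<mu>2 k1 k2 \<rho>1 \<rho>2 \<longrightarrow>
       (c \<noteq> 0 \<longrightarrow>
          \<theta> < pi / 4 \<and>
          p = (a * m * h + a^2 * q - b * c * m * sqrt (1 - b^2 * q^2)) / (a * c) \<and>
          (\<forall>u. \<mu>1 u = m \<and> \<mu>2 u = a * c * q - p \<and>
               k1 u = b * c * sqrt (1 - b^2 * q^2) / (2 * a) - h / 2 \<and>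
               k2 u = - c / 2 \<and>
               \<rho>1 u = (a^2 * h^2 - 2 * a * b * c * h * sqrt (1 - q^2 * b^2) + a^2 * p^2
                        + c^4 * q^2 - 2 * a^3 * c * p * q - a^2 * m^2 + c^2) / (2 * a^2) \<and>
               \<rho>2 u = (a^2 * c * m * q - a * c * h - a * m * p - b * sqrt (1 - q^2 * b^2)) / a)) \<and>
       (c = 0 \<longrightarrow>
          \<bar>h * m\<bar> \<le> 1 \<and>
          (\<forall>u. \<mu>1 u = m \<and> \<mu>2 u = - p \<and> k1 u = - h / 2 \<and> k2 u = 0 \<and>
               \<rho>1 u = (h^2 + p^2 - m^2) / 2 \<and>
               \<rho>2 u = - p * m - sqrt (1 - h^2 * m^2))))
    \<and>
    (c \<noteq> 0 \<longrightarrow>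
       (\<forall>h m q. \<bar>q\<bar> * \<bar>b\<bar> \<le> 1 \<longrightarrow>
          (let p = (a * m * h + a^2 * q - b * c * m * sqrt (1 - b^2 * q^2)) / (a * c) in
           \<exists>Yh. admissible \<theta> h m q p Yh
                  (\<lambda>_. m) (\<lambda>_. a * c * q - p)
                  (\<lambda>_. b * c * sqrt (1 - b^2 * q^2) / (2 * a) - h / 2) (\<lambda>_. - c / 2)
                  (\<lambda>_. (a^2 * h^2 - 2 * a * b * c * h * sqrt (1 - q^2 * b^2) + a^2 * p^2
                        + c^4 * q^2 - 2 * a^3 * c * p * q - a^2 * m^2 + c^2) / (2 * a^2))
                  (\<lambda>_. (a^2 * c * m * q - a * c * h - a * m * p - b * sqrt (1 - q^2 * b^2)) / a))))
    \<and>
    (c = 0 \<longrightarrow>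
       (\<forall>h m p. \<bar>h * m\<bar> \<le> 1 \<longrightarrow>
          (\<exists>q Yh. \<bar>q\<bar> * \<bar>b\<bar> \<le> 1 \<and>
             admissible \<theta> h m q p Yh
               (\<lambda>_. m) (\<lambda>_. - p) (\<lambda>_. - h / 2) (\<lambda>_. 0)
               (\<lambda>_. (h^2 + p^2 - m^2) / 2) (\<lambda>_. - p * m - sqrt (1 - h^2 * m^2)))))"
proof -
  define a b c where "a = cos \<theta>" and "b = sin \<theta>" and "c = sqrt (cos (2 * \<theta>))"
  note frame = invariant_frame_at[OF assms, folded a_def b_def c_def]
  have c_zero: "c = 0 \<longleftrightarrow> \<theta> = pi / 4"
    using quarter_angle(3)[OF assms] unfolding c_def .
  have b_eq_a: "b = a" if "c = 0"
    using quarter_angle(4)[OF assms] that unfolding a_def b_def c_def by simp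
  have hm_bound: "\<bar>h * m\<bar> = \<bar>q\<bar> * \<bar>b\<bar>" if "c = 0" and "q * a = - (m * h)" for h m q
    using that b_eq_a by (metis abs_minus_cancel abs_mult mult.commute)
  have swap: "sqrt (1 - q^2 * b^2) = sqrt (1 - b^2 * q^2)" for q
    by (simp add: mult.commute)
  show ?thesis
    unfolding Let_def a_def[symmetric] b_def[symmetric] c_def[symmetric] swap
  proof (intro conjI, goal_cases classification existence_c_nonzero existence_c_zero)
    case classification
    show ?case
    proof (intro allI impI, goal_cases)
      case (1 h m q p Yh \<mu>1 \<mu>2 k1 k2 \<rho>1 \<rho>2)
      then interpret invariant_frame a b c "sqrt (1 - b^2 * q^2)" q "inverse a" \<theta>
        using frame by blast
      show ?case
        using 1 admissible_iff_c_nonzero admissible_iff_c_zero b_eq_a hm_bound c_zero assms(2)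
        by auto
    qed
  next
    case existence_c_nonzero
    show ?case
    proof (intro allI impI, goal_cases)
      case (1 h m q)
      then interpret invariant_frame a b c "sqrt (1 - b^2 * q^2)" q "inverse a" \<theta>
        using frame by blast
      show ?case
        unfolding Let_def using admissible_iff_c_nonzero 1 by blast
    qed
  next
    case existence_c_zero
    show ?case
    proof (intro allI impI, goal_cases)
      case (1 h m p)
      define q where "q = - (m * h) / a"
      have qa: "q * a = - (m * h)"
        unfolding q_def using quarter_angle(1)[OF assms] a_def by simp
      have q_bound: "\<bar>q\<bar> * \<bar>b\<bar> \<le> 1" using hm_bound[OF _ qa] 1 by simp
      interpret invariant_frame a b c "sqrt (1 - b^2 * q^2)" q "inverse a" \<theta>
        using frame q_bound by blast
      show ?case
        using admissible_iff_c_zero b_eq_a qa q_bound 1 by blast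
    qed
  qed
qed

end
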